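(* Consider a group of $n$ agents described as rigid bodies with poses given by unit dual quaternions $\underline{\boldsymbol{x}}_i=\boldsymbol{r}_i+\varepsilon\frac{1}{2}\boldsymbol{p}_i\boldsymbol{r}_i$. Let the dynamics of each agent be $\operatorname{vec}_{8}\underline{\boldsymbol{u}}_{x,i}\triangleq\operatorname{vec}_{8}\dot{\underline{\boldsymbol{x}}}_{i}$, $i=1,\ldots,n$, with output $\underline{\boldsymbol{y}}_{i}=\log\underline{\boldsymbol{x}}_{i}$. Under the consensus protocol \[ \operatorname{vec}_{8}\underline{\boldsymbol{u}}_{x,i}=-\boldsymbol{Q}_{8}(\underline{\boldsymbol{x}}_{i})\sum_{j=1}^{n}a_{ij}\operatorname{vec}_{6}\left(\underline{\boldsymbol{y}}_{i}-\underline{\boldsymbol{y}}_{j}\right), \] the multi-agent system asymptotically achieves consensus in the output $\underline{\boldsymbol{y}}_{i}$ (i.e., $\lim_{t\to\infty}(\underline{\boldsymbol{y}}_i(t)-\underline{\boldsymbol{y}}_j(t))=0$ for all $i,j$), which implies consensus in the poses ($\lim_{t\to\infty}\underline{\boldsymbol{x}}_i=\lim_{t\to\infty}\underline{\boldsymbol{x}}_j$), if and only if the directed graph $\mathcal{G}$ describing the network topology has a directed spanning tree.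
   Context: Quaternions $\boldsymbol{h}=h_{1}+\hat{\imath}h_{2}+\hat{\jmath}h_{3}+\hat{k}h_{4}$ ($\hat{\imath}^{2}=\hat{\jmath}^{2}=\hat{k}^{2}=\hat{\imath}\hat{\jmath}\hat{k}=-1$), dual quaternions $\underline{\boldsymbol{h}}=\boldsymbol{h}+\varepsilon\boldsymbol{h}'$ ($\varepsilon^2=0$). $\boldsymbol{r}_i\in\mathbb{S}^3$ is a unit quaternion $\cos(\phi_i/2)+\boldsymbol{n}_i\sin(\phi_i/2)$, $\phi_i\in[0,2\pi)$, $\boldsymbol{n}_i$ a unit pure quaternion, and $\boldsymbol{p}_i$ a pure quaternion (translation); $\log\underline{\boldsymbol{x}}_i=\frac{1}{2}(\phi_i\boldsymbol{n}_i+\varepsilon\boldsymbol{p}_i)$ is a pure dual quaternion. $\operatorname{vec}_4,\operatorname{vec}_8$ stack the coefficients of a quaternion/dual quaternion into $\mathbb{R}^4,\mathbb{R}^8$; $\operatorname{vec}_3,\operatorname{vec}_6$ stack the imaginary coefficients of pure quaternions/pure dual quaternions into $\mathbb{R}^3,\mathbb{R}^6$. $\boldsymbol{Q}_{8}(\underline{\boldsymbol{x}})=\begin{bmatrix}\boldsymbol{Q}(\boldsymbol{r}) & \boldsymbol{0}_{4\times3}\\ \frac{1}{2}\overset{+}{\boldsymbol{H}}_{4}(\boldsymbol{p})\boldsymbol{Q}(\boldsymbol{r}) & \overset{-}{\boldsymbol{H}}_{4}(\boldsymbol{r})\begin{bmatrix}\boldsymbol{0}_{1\times3}\\ \boldsymbol{I}_3\end{bmatrix}\end{bmatrix}\in\mathbb{R}^{8\times6}$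 is the full-column-rank matrix with $\operatorname{vec}_8\dot{\underline{\boldsymbol{x}}}=\boldsymbol{Q}_8(\underline{\boldsymbol{x}})\operatorname{vec}_6\dot{\underline{\boldsymbol{y}}}$ for $\underline{\boldsymbol{y}}=\log\underline{\boldsymbol{x}}$, where $\boldsymbol{Q}(\boldsymbol{r})=\partial\operatorname{vec}_4\boldsymbol{r}/\partial\operatorname{vec}_3\log\boldsymbol{r}$, and $\overset{+}{\boldsymbol{H}}_{4},\overset{-}{\boldsymbol{H}}_{4}$ are the quaternion Hamilton operators defined by $\operatorname{vec}_4(\boldsymbol{h}_1\boldsymbol{h}_2)=\overset{+}{\boldsymbol{H}}_4(\boldsymbol{h}_1)\operatorname{vec}_4\boldsymbol{h}_2=\overset{-}{\boldsymbol{H}}_4(\boldsymbol{h}_2)\operatorname{vec}_4\boldsymbol{h}_1$. $a_{ij}$ are the entries of the adjacency matrix of the weighted directed graph $\mathcal{G}$: $a_{ij}>0$ iff there is an edge from agent $j$ to agent $i$ (agent $i$ receives information from $j$), and $a_{ij}=0$ otherwise (including $i=j$). *)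

theory Defs
  imports "HOL-Analysis.Analysis"
begin

text \<open>Quaternions are represented by their coefficient vectors in real^4
  (so vec4 is the identity); pure quaternions by their imaginary
  coefficients in real^3 (vec3); dual quaternions h + eps h' by pairs
  (vec4 h, vec4 h') in real^4 x real^4 (vec8); pure dual quaternions by
  pairs in real^3 x real^3 (vec6).\<close>

type_synonym dq = "(real^4) \<times> (real^4)"
type_synonym pdq = "(real^3) \<times> (real^3)"

definition hmul :: "real^4 \<Rightarrow> real^4 \<Rightarrow> real^4" where
  "hmul a b = vector
     [a$1*b$1 - a$2*b$2 - a$3*b$3 - a$4*b$4,
      a$1*b$2 + a$2*b$1 + a$3*b$4 - a$4*b$3,
      a$1*b$3 - a$2*b$4 + a$3*b$1 + a$4*b$2,
      a$1*b$4 + a$2*b$3 - a$3*b$2 + a$4*b$1]"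

definition qconj :: "real^4 \<Rightarrow> real^4" where
  "qconj a = vector [a$1, - a$2, - a$3, - a$4]"

definition pure :: "real^3 \<Rightarrow> real^4" where
  "pure v = vector [0, v$1, v$2, v$3]"

definition im :: "real^4 \<Rightarrow> real^3" where
  "im q = vector [q$2, q$3, q$4]"

definition qone :: "real^4" where
  "qone = vector [1, 0, 0, 0]"

definition Hplus :: "real^4 \<Rightarrow> real^4^4" where
  "Hplus h = matrix (\<lambda>q. hmul h q)"

definition Hminus :: "real^4 \<Rightarrow> real^4^4" where
  "Hminus h = matrix (\<lambda>q. hmul q h)"

text \<open>the 4x3 matrix [0_{1x3}; I_3]\<close>
definition E43 :: "real^3^4" where
  "E43 = matrix pure"

definition qexp :: "real^3 \<Rightarrow> real^4" where
  "qexp u = (if u = 0 then qone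
             else cos (norm u) *\<^sub>R qone + (sin (norm u) / norm u) *\<^sub>R pure u)"

text \<open>vec3 of the logarithm of a unit quaternion r = cos(phi/2) + n sin(phi/2),
  phi in [0, 2 pi): log r = (phi/2) n, i.e. phi/2 = arccos (r$1) and
  n = im r / |im r| (n irrelevant when phi = 0).\<close>
definition qlog :: "real^4 \<Rightarrow> real^3" where
  "qlog r = (arccos (r$1) / norm (im r)) *\<^sub>R im r"

text \<open>Q(r) = d vec4 r / d vec3 log r : Jacobian of the exponential map
  evaluated at log r\<close>
definition Qmat :: "real^4 \<Rightarrow> real^3^4" where
  "Qmat r = jacobian qexp (at (qlog r))"

definition unit_dq :: "dq \<Rightarrow> bool" where
  "unit_dq x \<longleftrightarrow> (\<exists>r p. norm r = 1 \<and> (\<exists>\<phi> n. 0 \<le> \<phi> \<and> \<phi> < 2*pi \<and> norm n = 1 \<and>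
        r = cos (\<phi>/2) *\<^sub>R qone + sin (\<phi>/2) *\<^sub>R pure n)
      \<and> x = (r, (1/2) *\<^sub>R hmul (pure p) r))"

text \<open>rotation part r and translation p (pure, as vec3) of x = r + eps (1/2) p r\<close>
definition dq_rot :: "dq \<Rightarrow> real^4" where
  "dq_rot x = fst x"

definition dq_trans :: "dq \<Rightarrow> real^3" where
  "dq_trans x = 2 *\<^sub>R im (hmul (snd x) (qconj (fst x)))"

text \<open>vec6 (log x) = vec6 ((1/2)(phi n + eps p)) = (vec3 log r, vec3 (p/2))\<close>
definition dq_log :: "dq \<Rightarrow> pdq" where
  "dq_log x = (qlog (dq_rot x), (1/2) *\<^sub>R dq_trans x)"

text \<open>Q8(x) applied to a vec6 vector (u, v), written blockwise:
  Q8(x) = [Q(r), 0; (1/2) H+(p) Q(r), H-(r) [0;I]]\<close>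
definition Q8 :: "dq \<Rightarrow> pdq \<Rightarrow> dq" where
  "Q8 x w = (let r = dq_rot x; p = pure (dq_trans x) in
     (Qmat r *v fst w,
      ((1/2) *\<^sub>R (Hplus p ** Qmat r)) *v fst w + (Hminus r ** E43) *v snd w))"

text \<open>closed-loop trajectories (agents indexed 0..n-1) on [0, infinity)\<close>
definition closed_loop_solution ::
    "nat \<Rightarrow> (nat \<Rightarrow> nat \<Rightarrow> real) \<Rightarrow> (nat \<Rightarrow> real \<Rightarrow> dq) \<Rightarrow> bool" where
  "closed_loop_solution n a x \<longleftrightarrow>
     (\<forall>i<n. \<forall>t\<ge>0. unit_dq (x i t) \<and>
        (x i has_vector_derivative
           - Q8 (x i t) (\<Sum>j<n. a i j *\<^sub>R (dq_log (x i t) - dq_log (x j t))))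
          (at t within {0..}))"

definition achieves_output_consensus ::
    "nat \<Rightarrow> (nat \<Rightarrow> nat \<Rightarrow> real) \<Rightarrow> bool" where
  "achieves_output_consensus n a \<longleftrightarrow>
     (\<forall>x. closed_loop_solution n a x \<longrightarrow>
        (\<forall>i<n. \<forall>j<n. ((\<lambda>t. dq_log (x i t) - dq_log (x j t)) \<longlongrightarrow> 0) at_top))"

text \<open>edge j -> i iff a i j > 0. A directed spanning tree: a root k and a
  parent map par (edge par i -> i for every non-root node) such that
  following parents from any node reaches the root.\<close>
definition has_directed_spanning_tree :: "nat \<Rightarrow> (nat \<Rightarrow> nat \<Rightarrow> real) \<Rightarrow> bool" where
  "has_directed_spanning_tree n a \<longleftrightarrow>
     (\<exists>k<n. \<exists>par. \<forall>i<n. i \<noteq> k \<longrightarrow>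
        par i < n \<and> a i (par i) > 0 \<and> (\<exists>m. (par ^^ m) i = k))"

end

theory Submission
  imports Defs
begin

text \<open>Along a closed-loop trajectory the outputs \<open>y\<^sub>i = log x\<^sub>i\<close> obey the linear consensus
  dynamics \<open>y\<^sub>i' = - (\<Sum>j. a\<^sub>i\<^sub>j (y\<^sub>i - y\<^sub>j))\<close>: the rotational block of \<open>Q\<^sub>8\<close> is the
  derivative of the exponential map at \<open>log r\<close>, which is injective because \<open>|log r| < \<pi>\<close>, so
  differentiating \<open>r = exp (log r)\<close> recovers the derivative of \<open>log r\<close>; the translational part
  follows from differentiating the dual part against \<open>r r* = 1\<close>.

  With a spanning tree each coordinate of the outputs reaches consensus: the minimum over the
  agents never decreases, the maximum never increases, and within a time window of fixed length
  the root's distance to one of the two bounds is passed on along the tree, so that the spread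
  shrinks by a fixed factor per window.

  Without a spanning tree there are two disjoint nonempty groups of agents that receive no
  information from outside.  A function that is \<open>1\<close> on one group, \<open>0\<close> on the other and
  harmonic elsewhere yields constant poses that form a closed-loop solution without consensus.\<close>

section \<open>Quaternion algebra\<close>

lemma vector_4 [simp]:
  "(vector [a, b, c, d] :: 'a::zero^4) $ 1 = a"
  "(vector [a, b, c, d] :: 'a::zero^4) $ 2 = b"
  "(vector [a, b, c, d] :: 'a::zero^4) $ 3 = c"
  "(vector [a, b, c, d] :: 'a::zero^4) $ 4 = d"
  by (simp_all add: vector_def)

lemma norm_vec4: "norm (q::real^4) = sqrt ((q$1)\<^sup>2 + (q$2)\<^sup>2 + (q$3)\<^sup>2 + (q$4)\<^sup>2)"
  unfolding norm_eq_sqrt_inner inner_vec_def sum_4 by (simp add: power2_eq_square)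

lemma norm_vec3: "norm (q::real^3) = sqrt ((q$1)\<^sup>2 + (q$2)\<^sup>2 + (q$3)\<^sup>2)"
  unfolding norm_eq_sqrt_inner inner_vec_def sum_3 by (simp add: power2_eq_square)

lemma linear_pure: "linear pure"
  by (rule linearI) (simp_all add: pure_def vec_eq_iff forall_4)

lemma bounded_linear_pure: "bounded_linear pure"
  using linear_pure by (simp add: linear_conv_bounded_linear)

lemma linear_im: "linear im"
  by (rule linearI) (simp_all add: im_def vec_eq_iff forall_3)

lemma bounded_linear_im: "bounded_linear im"
  using linear_im by (simp add: linear_conv_bounded_linear)

lemma bounded_linear_qconj: "bounded_linear qconj"
  by (simp add: linear_conv_bounded_linear[symmetric] linearI qconj_def vec_eq_iff forall_4)

lemma bilinear_hmul: "bilinear hmul"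
  unfolding bilinear_def by (auto intro!: linearI simp: hmul_def vec_eq_iff forall_4 algebra_simps)

interpretation hmul: bounded_bilinear hmul
  using bilinear_hmul by (simp add: bilinear_conv_bounded_bilinear)

lemma hmul_assoc: "hmul (hmul a b) c = hmul a (hmul b c)"
  by (simp add: hmul_def vec_eq_iff forall_4 algebra_simps)

lemma hmul_qone [simp]: "hmul q qone = q"
  by (simp add: hmul_def qone_def vec_eq_iff forall_4)

lemma hmul_qconj: "hmul r (qconj r) = (norm r)\<^sup>2 *\<^sub>R qone"
  by (simp add: hmul_def qconj_def qone_def norm_vec4 vec_eq_iff forall_4 algebra_simps power2_eq_square)

lemma qconj_qone [simp]: "qconj qone = qone"
  by (simp add: qconj_def qone_def vec_eq_iff forall_4)

lemma norm_qone [simp]: "norm qone = 1"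
  by (simp add: norm_vec4 qone_def)

lemma im_qone [simp]: "im qone = 0"
  by (simp add: im_def qone_def vec_eq_iff forall_3)

lemma im_pure [simp]: "im (pure p) = p"
  by (simp add: im_def pure_def vec_eq_iff forall_3)

lemma pure_eq_0_iff [simp]: "pure p = 0 \<longleftrightarrow> p = 0"
  by (metis im_pure linear_0[OF linear_pure])

lemma norm_pure [simp]: "norm (pure p) = norm p"
  by (simp add: norm_vec4 norm_vec3 pure_def)

lemma qone_nth_1 [simp]: "qone $ 1 = 1"
  by (simp add: qone_def)

lemma pure_nth_1 [simp]: "pure v $ 1 = 0"
  by (simp add: pure_def)

lemma im_qone_plus_pure [simp]: "im (c *\<^sub>R qone + s *\<^sub>R pure v) = s *\<^sub>R v"
  by (simp add: linear_add[OF linear_im] linear_scale[OF linear_im])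

lemma Hplus_vector [simp]: "Hplus p *v q = hmul p q"
  using hmul.bounded_linear_right[THEN bounded_linear.linear] by (simp add: Hplus_def matrix_works)

lemma Hminus_vector [simp]: "Hminus p *v q = hmul q p"
  using hmul.bounded_linear_left[THEN bounded_linear.linear] by (simp add: Hminus_def matrix_works)

lemma E43_vector [simp]: "E43 *v v = pure v"
  using linear_pure by (simp add: E43_def matrix_works)

section \<open>Unit dual quaternions\<close>

definition rotation_quat :: "real^4 \<Rightarrow> bool" where
  "rotation_quat r \<longleftrightarrow> (\<exists>\<phi> v. 0 \<le> \<phi> \<and> \<phi> < 2*pi \<and> norm v = 1 \<and>
        r = cos (\<phi>/2) *\<^sub>R qone + sin (\<phi>/2) *\<^sub>R pure v)"

lemma rotation_quatE:
  assumes "rotation_quat r"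
  obtains \<phi> v where "0 \<le> \<phi>" "\<phi> < 2*pi" "norm v = 1"
    "r = cos (\<phi>/2) *\<^sub>R qone + sin (\<phi>/2) *\<^sub>R pure v"
  using assms unfolding rotation_quat_def by blast

lemma unit_dq_rotation_quat: "unit_dq x \<Longrightarrow> rotation_quat (fst x)"
  unfolding unit_dq_def rotation_quat_def by (elim exE conjE) auto

lemma unit_dq_norm_rot: "unit_dq x \<Longrightarrow> norm (fst x) = 1"
  unfolding unit_dq_def by auto

lemma unit_dq_dual_part:
  assumes "unit_dq x" shows "snd x = (1/2) *\<^sub>R hmul (pure (dq_trans x)) (fst x)"
proof -
  obtain r p where r: "norm r = 1" and x: "x = (r, (1/2) *\<^sub>R hmul (pure p) r)"
    using assms unfolding unit_dq_def by blast
  have "dq_trans x = p"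
    unfolding dq_trans_def x
    by (simp add: hmul.scaleR_left hmul_assoc hmul_qconj r linear_scale[OF linear_im])
  then show ?thesis using x by simp
qed

lemma at_within_atLeast_nontrivial:
  assumes "t \<ge> (c::real)" shows "at t within {c..} \<noteq> bot"
proof -
  have "at_right t \<le> at t within {c..}" using assms by (intro at_le) auto
  then show ?thesis using trivial_limit_at_right_real[of t] by (metis bot.extremum_uniqueI)
qed

text \<open>The dual part q = p r / 2 of a unit dual quaternion gives p / 2 = q r*; differentiating
  r r* = 1 shows r R'* + R' r* = 0 for the derivative R' of r, which cancels the rotational terms
  of Q8 in the derivative of q r*.\<close>

lemma dq_trans_has_vector_derivative:
  fixes x :: "real \<Rightarrow> dq"
  assumes unit: "\<And>s. s \<in> S \<Longrightarrow> unit_dq (x s)" and t: "t \<in> S" and S: "at t within S \<noteq> bot"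
    and der: "(x has_vector_derivative - Q8 (x t) w) (at t within S)"
  shows "((\<lambda>s. (1/2) *\<^sub>R dq_trans (x s)) has_vector_derivative - snd w) (at t within S)"
proof -
  define r where "r s = fst (x s)" for s
  define q where "q s = snd (x s)" for s
  define p where "p = pure (dq_trans (x t))"
  define R' where "R' = - (Qmat (r t) *v fst w)"
  define q' where "q' = (1/2) *\<^sub>R hmul p R' - hmul (pure (snd w)) (r t)"
  have dr: "(r has_vector_derivative R') (at t within S)"
    using bounded_linear.has_vector_derivative[OF bounded_linear_fst der] unfolding r_def[abs_def]
    by (simp add: R'_def r_def Q8_def Let_def dq_rot_def)
  have dq: "(q has_vector_derivative q') (at t within S)"
    using bounded_linear.has_vector_derivative[OF bounded_linear_snd der] unfolding q_def[abs_def]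
    by (simp add: q'_def R'_def p_def r_def Q8_def Let_def dq_rot_def hmul.minus_right
        matrix_vector_mul_assoc[symmetric] scaleR_matrix_vector_assoc[symmetric])
  have drc: "((\<lambda>s. qconj (r s)) has_vector_derivative qconj R') (at t within S)"
    using bounded_linear.has_vector_derivative[OF bounded_linear_qconj dr] .
  have "((\<lambda>s. hmul (r s) (qconj (r s))) has_vector_derivative
      hmul (r t) (qconj R') + hmul R' (qconj (r t))) (at t within S)"
    using hmul.has_vector_derivative[OF dr drc] .
  moreover have "((\<lambda>s. hmul (r s) (qconj (r s))) has_vector_derivative 0) (at t within S)"
    by (rule has_vector_derivative_transform[OF t _ has_vector_derivative_const])
      (simp add: r_def hmul_qconj unit_dq_norm_rot unit)
  ultimately have rr: "hmul (r t) (qconj R') + hmul R' (qconj (r t)) = 0"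
    using vector_derivative_unique_within[OF S] by blast
  have qt: "q t = (1/2) *\<^sub>R hmul p (r t)"
    using unit_dq_dual_part[OF unit[OF t]] by (simp add: q_def p_def r_def)
  have "hmul (q t) (qconj R') + hmul q' (qconj (r t))
      = (1/2) *\<^sub>R hmul p (hmul (r t) (qconj R') + hmul R' (qconj (r t)))
        - hmul (pure (snd w)) (hmul (r t) (qconj (r t)))"
    by (simp add: qt q'_def hmul.scaleR_left hmul_assoc hmul.diff_left hmul.add_right algebra_simps)
  also have "\<dots> = - pure (snd w)"
    unfolding rr using unit_dq_norm_rot[OF unit[OF t]] by (simp add: hmul.zero_right hmul_qconj r_def)
  finally have "hmul (q t) (qconj R') + hmul q' (qconj (r t)) = - pure (snd w)" .
  moreover have "((\<lambda>s. im (hmul (q s) (qconj (r s)))) has_vector_derivative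
      im (hmul (q t) (qconj R') + hmul q' (qconj (r t)))) (at t within S)"
    using bounded_linear.has_vector_derivative[OF bounded_linear_im hmul.has_vector_derivative[OF dq drc]] .
  ultimately show ?thesis
    by (simp add: dq_trans_def q_def r_def linear_neg[OF linear_im])
qed

section \<open>The exponential map and the logarithm\<close>

definition qexp_differential :: "real^3 \<Rightarrow> real^3 \<Rightarrow> real^4" where
  "qexp_differential w h = (if w = 0 then pure h else
     (sin (norm w) / norm w) *\<^sub>R pure h
     + ((cos (norm w) * inner h (sgn w) * norm w - sin (norm w) * inner h (sgn w)) / (norm w * norm w))
         *\<^sub>R pure w
     - (inner h (sgn w) * sin (norm w)) *\<^sub>R qone)"

lemma qexp_has_derivative_nonzero:
  assumes w: "w \<noteq> 0"
  shows "(qexp has_derivative qexp_differential w) (at w)"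
proof -
  define g where "g y = cos (norm y) *\<^sub>R qone + (sin (norm y) / norm y) *\<^sub>R pure y" for y :: "real^3"
  have coeff: "h \<bullet> sgn w * cos (norm w) / norm w
        - sin (norm w) * (inverse (norm w) * (h \<bullet> sgn w) * inverse (norm w))
      = (cos (norm w) * (h \<bullet> sgn w) * norm w - sin (norm w) * (h \<bullet> sgn w)) / (norm w * norm w)"
    for h
    using w by (simp add: field_simps)
  have "(g has_derivative qexp_differential w) (at w)"
    unfolding g_def
    by (rule has_derivative_eq_rhs, (rule derivative_eq_intros has_derivative_norm[OF w]
        bounded_linear.has_derivative[OF bounded_linear_pure has_derivative_ident] | simp add: w)+)
      (simp only: fun_eq_iff coeff qexp_differential_def w if_False, simp)
  moreover have "g y = qexp y" if "y \<in> - {0}" for y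
    using that by (simp add: g_def qexp_def)
  ultimately show ?thesis
    using has_derivative_transform_within_open[of g _ w UNIV "- {0}"] w by auto
qed

lemma abs_cos_minus_one_le: "\<bar>cos x - 1\<bar> \<le> (x::real)\<^sup>2 / 2"
proof -
  have "cos x - 1 = - 2 * (sin (x/2))\<^sup>2"
    using cos_double_sin[of "x/2"] by simp
  moreover have "(sin (x/2))\<^sup>2 \<le> (x/2)\<^sup>2"
    using abs_sin_x_le_abs_x[of "x/2"] by (metis abs_ge_zero power2_abs power_mono)
  ultimately show ?thesis by (simp add: power_divide)
qed

lemma abs_sin_minus_le: "\<bar>sin x - x\<bar> \<le> (x::real)\<^sup>2 / 2"
  using Maclaurin_sin_bound[of x 2] by (simp add: numeral_2_eq_2 sin_coeff_def power2_abs)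

lemma qexp_has_derivative_zero: "(qexp has_derivative pure) (at 0)"
  unfolding has_derivative_at_alt
proof (intro conjI allI impI bounded_linear_pure)
  fix e :: real assume e: "e > 0"
  have "norm (qexp y - qexp 0 - pure (y - 0)) \<le> e * norm (y - 0)" if y: "norm (y - 0) < e" for y
  proof (cases "y = 0")
    case True then show ?thesis by (simp add: qexp_def)
  next
    case False
    define \<rho> where "\<rho> = norm y"
    have \<rho>: "\<rho> > 0" using False by (simp add: \<rho>_def)
    have "qexp y - qexp 0 - pure (y - 0) = (cos \<rho> - 1) *\<^sub>R qone + (sin \<rho> / \<rho> - 1) *\<^sub>R pure y"
      using False by (simp add: qexp_def \<rho>_def algebra_simps)
    then have "norm (qexp y - qexp 0 - pure (y - 0)) \<le> \<bar>cos \<rho> - 1\<bar> + \<bar>sin \<rho> / \<rho> - 1\<bar> * \<rho>"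
      by (metis \<rho>_def norm_pure norm_qone norm_scaleR norm_triangle_ineq mult.right_neutral)
    also have "\<bar>sin \<rho> / \<rho> - 1\<bar> * \<rho> = \<bar>sin \<rho> - \<rho>\<bar>"
    proof -
      have "(sin \<rho> / \<rho> - 1) * \<rho> = sin \<rho> - \<rho>" using \<rho> by (simp add: field_simps)
      then show ?thesis by (metis abs_mult abs_of_pos \<rho>)
    qed
    also have "\<bar>cos \<rho> - 1\<bar> + \<bar>sin \<rho> - \<rho>\<bar> \<le> \<rho> * \<rho>"
      using abs_cos_minus_one_le[of \<rho>] abs_sin_minus_le[of \<rho>] by (simp add: power2_eq_square)
    also have "\<dots> \<le> e * \<rho>" using y \<rho> by (intro mult_right_mono) (auto simp: \<rho>_def)
    finally show ?thesis by (simp add: \<rho>_def)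
  qed
  then show "\<exists>d>0. \<forall>y. norm (y - 0) < d \<longrightarrow> norm (qexp y - qexp 0 - pure (y - 0)) \<le> e * norm (y - 0)"
    using e by blast
qed

lemma qexp_has_derivative: "(qexp has_derivative qexp_differential w) (at w)"
  using qexp_has_derivative_nonzero[of w] qexp_has_derivative_zero
  by (cases "w = 0") (simp_all add: qexp_differential_def[abs_def])

lemma Qmat_vector: "Qmat r *v h = qexp_differential (qlog r) h"
proof -
  have "(qexp has_derivative (\<lambda>h. Qmat r *v h)) (at (qlog r))"
    unfolding Qmat_def using jacobian_works qexp_has_derivative differentiableI by blast
  then show ?thesis using has_derivative_unique[OF qexp_has_derivative] by metis
qed

lemma qexp_differential_injective:
  assumes w: "norm w < pi" and h: "qexp_differential w h = 0"
  shows "h = 0"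
proof (cases "w = 0")
  case True
  then show ?thesis using h by (simp add: qexp_differential_def)
next
  case False
  have s: "sin (norm w) > 0" using False w by (intro sin_gt_zero) auto
  have "(qexp_differential w h) $ 1 = - (inner h (sgn w) * sin (norm w))"
    using False by (simp add: qexp_differential_def pure_def qone_def)
  then have "inner h (sgn w) = 0" using h s by simp
  then have "(sin (norm w) / norm w) *\<^sub>R pure h = 0" using h False by (simp add: qexp_differential_def)
  then show ?thesis using s False by simp
qed

lemma qexp_scaleR_unit:
  assumes v: "norm v = 1"
  shows "qexp (\<theta> *\<^sub>R v) = cos \<theta> *\<^sub>R qone + sin \<theta> *\<^sub>R pure v"
proof (cases "\<theta> = 0")
  case False
  have "sin \<bar>\<theta>\<bar> / \<bar>\<theta>\<bar> * \<theta> = sin \<theta>"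
    using False by (cases "\<theta> \<ge> 0") (simp_all add: field_simps)
  moreover have "v \<noteq> 0" using v by auto
  ultimately show ?thesis
    using False v by (simp add: qexp_def linear_scale[OF linear_pure])
qed (simp add: qexp_def)

lemma sin_half_angle_eq_0:
  assumes "0 \<le> \<phi>" "\<phi> < 2*pi" "sin (\<phi>/2) = 0"
  shows "\<phi> = 0"
  using assms sin_gt_zero[of "\<phi>/2"] by fastforce

lemma qlog_rotation:
  assumes \<phi>: "0 \<le> \<phi>" "\<phi> < 2*pi" and v: "norm v = 1"
  shows "qlog (cos (\<phi>/2) *\<^sub>R qone + sin (\<phi>/2) *\<^sub>R pure v) = (\<phi>/2) *\<^sub>R v"
proof (cases "sin (\<phi>/2) = 0")
  case True
  then show ?thesis using sin_half_angle_eq_0[OF \<phi>] by (simp add: qlog_def)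
next
  case False
  have "sin (\<phi>/2) \<ge> 0" using \<phi> by (intro sin_ge_zero) auto
  moreover have "arccos (cos (\<phi>/2)) = \<phi>/2" using \<phi> by (intro arccos_cos) auto
  ultimately show ?thesis using False v by (simp add: qlog_def)
qed

lemma rotation_quat_qexp_qlog: "rotation_quat r \<Longrightarrow> qexp (qlog r) = r"
  by (elim rotation_quatE) (simp add: qlog_rotation qexp_scaleR_unit)

lemma rotation_quat_norm_qlog: "rotation_quat r \<Longrightarrow> norm (qlog r) = arccos (r $ 1)"
  by (elim rotation_quatE) (simp add: qlog_rotation arccos_cos)

lemma rotation_quat_norm_qlog_less: "rotation_quat r \<Longrightarrow> norm (qlog r) < pi"
  by (elim rotation_quatE) (simp add: qlog_rotation)

lemma tendsto_qlog:
  assumes r: "(r \<longlongrightarrow> r0) F" and rot: "\<forall>\<^sub>F s in F. rotation_quat (r s)"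
    and r0: "rotation_quat r0"
  shows "((\<lambda>s. qlog (r s)) \<longlongrightarrow> qlog r0) F"
proof -
  obtain \<phi> v where \<phi>: "0 \<le> \<phi>" "\<phi> < 2*pi" and v: "norm v = 1"
    and r0_eq: "r0 = cos (\<phi>/2) *\<^sub>R qone + sin (\<phi>/2) *\<^sub>R pure v"
    using r0 by (rule rotation_quatE)
  have first: "((\<lambda>s. r s $ 1) \<longlongrightarrow> cos (\<phi>/2)) F"
    using tendsto_vec_nth[OF r, of 1] by (simp add: r0_eq)
  show ?thesis
  proof (cases "sin (\<phi>/2) = 0")
    case False
    have "(cos (\<phi>/2))\<^sup>2 < 1"
      using False sin_cos_squared_add[of "\<phi>/2"] by (smt (verit) zero_less_power2)
    then have "isCont arccos (cos (\<phi>/2))" by (intro isCont_arccos) (simp_all add: abs_square_less_1)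
    then have "((\<lambda>s. arccos (r s $ 1)) \<longlongrightarrow> arccos (r0 $ 1)) F"
      using isCont_tendsto_compose[OF _ first] by (simp add: r0_eq)
    moreover have "norm (im r0) \<noteq> 0" using False v by (simp add: r0_eq)
    ultimately show ?thesis
      unfolding qlog_def
      by (intro tendsto_intros bounded_linear.tendsto[OF bounded_linear_im r])
  next
    case True
    \<comment> \<open>At \<open>r0 = 1\<close> the formula for \<open>qlog\<close> degenerates to \<open>0 / 0\<close>; use \<open>|qlog r| = arccos (r $ 1)\<close>.\<close>
    then have "\<phi> = 0" by (rule sin_half_angle_eq_0[OF \<phi>])
    have ev: "\<forall>\<^sub>F s in F. r s $ 1 \<in> {-1..1} \<and> norm (qlog (r s)) = arccos (r s $ 1)"
      using rot by eventually_elim (auto elim!: rotation_quatE simp: rotation_quat_norm_qlog)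
    have "((\<lambda>s. arccos (r s $ 1)) \<longlongrightarrow> arccos 1) F"
      using \<open>\<phi> = 0\<close> first ev
      by (intro continuous_on_tendsto_compose[OF continuous_on_arccos']) (auto elim: eventually_mono)
    then have "((\<lambda>s. norm (qlog (r s))) \<longlongrightarrow> arccos 1) F"
      by (rule Lim_transform_eventually) (use ev in \<open>auto elim: eventually_mono\<close>)
    moreover have "qlog r0 = 0" using \<open>\<phi> = 0\<close> by (simp add: r0_eq qlog_def)
    ultimately show ?thesis by (simp add: tendsto_norm_zero_iff)
  qed
qed

lemma norm_diff_le_absorb:
  fixes x y :: "'a::real_normed_vector"
  assumes "c * norm (x - y) \<le> \<eta> + \<epsilon> * norm x" and "0 \<le> \<epsilon>" "\<epsilon> \<le> c/2"
  shows "c/2 * norm (x - y) \<le> \<eta> + \<epsilon> * norm y"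
proof -
  have "\<epsilon> * norm x \<le> \<epsilon> * norm (x - y) + \<epsilon> * norm y"
    using norm_triangle_sub[of x y] \<open>0 \<le> \<epsilon>\<close> by (metis add.commute distrib_left mult_left_mono)
  moreover have "\<epsilon> * norm (x - y) \<le> c/2 * norm (x - y)"
    using \<open>\<epsilon> \<le> c/2\<close> by (rule mult_right_mono) simp
  ultimately show ?thesis using assms(1) by linarith
qed

text \<open>Writing \<open>\<Delta> = w s - w t\<close> and \<open>h = s - t\<close>, the identity
  \<open>J (\<Delta> - h u) = (r s - r t - h J u) - (f (w s) - f (w t) - J \<Delta>)\<close> bounds \<open>c |\<Delta> - h u|\<close> by
  \<open>o(h) + o(|\<Delta>|)\<close>, and \<open>|\<Delta>| \<le> |\<Delta> - h u| + |h| |u|\<close> lets the lower bound of \<open>J\<close> absorb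
  the second term.\<close>

lemma has_vector_derivative_cancel_injective:
  fixes f :: "'a::real_normed_vector \<Rightarrow> 'b::real_normed_vector" and w :: "real \<Rightarrow> 'a"
  assumes f: "(f has_derivative J) (at (w t))"
    and J: "\<And>d. c * norm d \<le> norm (J d)" and c: "c > 0"
    and w: "(w \<longlongrightarrow> w t) (at t within S)"
    and fw: "\<And>s. s \<in> S \<Longrightarrow> f (w s) = r s" and t: "t \<in> S"
    and r: "(r has_vector_derivative J u) (at t within S)"
  shows "(w has_vector_derivative u) (at t within S)"
  unfolding has_vector_derivative_def has_derivative_within_alt2
proof (intro conjI allI impI bounded_linear_scaleR_left)
  fix e :: real assume e: "e > 0"
  have lin: "linear J" using has_derivative_linear[OF f] .
  define K where "K = norm u"
  define \<epsilon> where "\<epsilon> = min (c/2) (c * e / (4 * (K + 1)))"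
  define \<eta> where "\<eta> = c * e / 4"
  have K: "K \<ge> 0" by (simp add: K_def)
  have \<epsilon>: "\<epsilon> > 0" "\<epsilon> \<le> c/2"
    using c e K unfolding \<epsilon>_def by (simp, linarith)
  have "\<epsilon> \<le> c * e / (4 * (K + 1))" by (simp add: \<epsilon>_def)
  then have "\<epsilon> * (K + 1) \<le> c * e / 4"
    using K by (simp add: pos_le_divide_eq algebra_simps)
  then have \<epsilon>K: "\<epsilon> * K \<le> c * e / 4" using \<epsilon>(1) by (simp add: distrib_left)
  have "\<forall>\<^sub>F y in nhds (w t). norm (f y - f (w t) - J (y - w t)) \<le> \<epsilon> * norm (y - w t)"
    using f \<epsilon>(1) linear_0[OF lin] unfolding has_derivative_within_alt2 eventually_nhds_conv_at by simp
  then have A: "\<forall>\<^sub>F s in at t within S. norm (f (w s) - f (w t) - J (w s - w t)) \<le> \<epsilon> * norm (w s - w t)"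
    using w unfolding filterlim_iff by blast
  have B: "\<forall>\<^sub>F s in at t within S. norm (r s - r t - (s - t) *\<^sub>R J u) \<le> \<eta> * norm (s - t)"
  proof -
    have "\<eta> > 0" using c e by (simp add: \<eta>_def)
    then show ?thesis using r unfolding has_vector_derivative_def has_derivative_within_alt2 by blast
  qed
  have "\<forall>\<^sub>F s in at t within S. s \<in> S" by (simp add: eventually_at_filter)
  then show "\<forall>\<^sub>F s in at t within S. norm (w s - w t - (s - t) *\<^sub>R u) \<le> e * norm (s - t)"
    using A B
  proof eventually_elim
    case (elim s)
    define \<Delta> where "\<Delta> = w s - w t"
    have "J (\<Delta> - (s - t) *\<^sub>R u) = (r s - r t - (s - t) *\<^sub>R J u) - (f (w s) - f (w t) - J \<Delta>)"
      using fw[OF elim(1)] fw[OF t] lin by (simp add: \<Delta>_def linear_diff linear_scale)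
    then have "c * norm (\<Delta> - (s - t) *\<^sub>R u) \<le> \<eta> * norm (s - t) + \<epsilon> * norm \<Delta>"
      using J[of "\<Delta> - (s - t) *\<^sub>R u"] order_trans[OF norm_triangle_ineq4 add_mono[OF elim(3,2)]]
      unfolding \<Delta>_def by simp
    then have "c/2 * norm (\<Delta> - (s - t) *\<^sub>R u) \<le> \<eta> * norm (s - t) + \<epsilon> * norm ((s - t) *\<^sub>R u)"
      using \<epsilon> by (intro norm_diff_le_absorb) auto
    also have "\<dots> = (\<eta> + \<epsilon> * K) * norm (s - t)" by (simp add: K_def distrib_right)
    also have "\<dots> \<le> (c/2 * e) * norm (s - t)"
      using \<epsilon>K by (intro mult_right_mono) (simp_all add: \<eta>_def)
    finally show ?case using c by (simp add: \<Delta>_def mult.assoc)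
  qed
qed

lemma qlog_has_vector_derivative:
  fixes x :: "real \<Rightarrow> dq"
  assumes unit: "\<And>s. s \<in> S \<Longrightarrow> unit_dq (x s)" and t: "t \<in> S"
    and der: "(x has_vector_derivative - Q8 (x t) w) (at t within S)"
  shows "((\<lambda>s. qlog (fst (x s))) has_vector_derivative - fst w) (at t within S)"
proof -
  define r where "r s = fst (x s)" for s
  define J where "J = qexp_differential (qlog (r t))"
  have rot: "rotation_quat (r s)" if "s \<in> S" for s
    using unit_dq_rotation_quat[OF unit[OF that]] by (simp add: r_def)
  have f: "(qexp has_derivative J) (at (qlog (r t)))"
    unfolding J_def by (rule qexp_has_derivative)
  obtain c where c: "c > 0" and J: "\<And>d. c * norm d \<le> norm (J d)"
    using injective_imp_isometric[of UNIV J] has_derivative_bounded_linear[OF f]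
      qexp_differential_injective[OF rotation_quat_norm_qlog_less[OF rot[OF t]]]
    by (auto simp: J_def)
  have "(r has_vector_derivative - J (fst w)) (at t within S)"
    using bounded_linear.has_vector_derivative[OF bounded_linear_fst der] unfolding r_def[abs_def]
    by (simp add: J_def r_def Q8_def Let_def dq_rot_def Qmat_vector)
  then have dr: "(r has_vector_derivative J (- fst w)) (at t within S)"
    by (simp add: linear_neg[OF has_derivative_linear[OF f]])
  have "(r \<longlongrightarrow> r t) (at t within S)"
    using has_vector_derivative_continuous[OF dr] by (simp add: continuous_within)
  moreover have "\<forall>\<^sub>F s in at t within S. rotation_quat (r s)"
    using rot by (auto simp: eventually_at_filter)
  ultimately have "((\<lambda>s. qlog (r s)) \<longlongrightarrow> qlog (r t)) (at t within S)"
    using rot[OF t] by (rule tendsto_qlog)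
  moreover have "qexp (qlog (r s)) = r s" if "s \<in> S" for s
    using rotation_quat_qexp_qlog[OF rot[OF that]] .
  ultimately have "((\<lambda>s. qlog (r s)) has_vector_derivative - fst w) (at t within S)"
    by (rule has_vector_derivative_cancel_injective[where w = "\<lambda>s. qlog (r s)", OF f J c _ _ t dr])
  then show ?thesis by (simp add: r_def)
qed

lemma dq_log_has_vector_derivative:
  fixes x :: "real \<Rightarrow> dq"
  assumes unit: "\<And>s. s \<in> S \<Longrightarrow> unit_dq (x s)" and t: "t \<in> S" and S: "at t within S \<noteq> bot"
    and der: "(x has_vector_derivative - Q8 (x t) w) (at t within S)"
  shows "((\<lambda>s. dq_log (x s)) has_vector_derivative - w) (at t within S)"
  using has_vector_derivative_Pair[OF qlog_has_vector_derivative[OF unit t der]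
      dq_trans_has_vector_derivative[OF unit t S der]]
  by (cases w) (simp add: dq_log_def dq_rot_def)

lemma closed_loop_log_dynamics:
  assumes "closed_loop_solution n a x" and "i < n" and "t \<ge> 0"
  shows "((\<lambda>s. dq_log (x i s)) has_vector_derivative
      - (\<Sum>j<n. a i j *\<^sub>R (dq_log (x i t) - dq_log (x j t)))) (at t within {0..})"
  using assms unfolding closed_loop_solution_def
  by (intro dq_log_has_vector_derivative at_within_atLeast_nontrivial) auto

section \<open>Consensus along a spanning tree\<close>

lemma differential_inequality_lower_bound:
  fixes f :: "real \<Rightarrow> real"
  assumes ab: "a \<le> b" and D: "D \<ge> 0" and c: "c \<ge> 0"
    and cont: "continuous_on {a..b} f"
    and der: "\<And>t. a < t \<Longrightarrow> t < b \<Longrightarrow> \<exists>f'. (f has_real_derivative f') (at t) \<and> - D * f t + c \<le> f'"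
  shows "exp (- D * (b - a)) * (f a + c * (b - a)) \<le> f b"
proof -
  define G where "G t = exp (D * (t - a)) * f t - c * (t - a)" for t
  have "G a \<le> G b"
  proof (rule DERIV_nonneg_imp_increasing_open[OF ab])
    fix t assume t: "a < t" "t < b"
    obtain f' where f': "(f has_real_derivative f') (at t)" "- D * f t + c \<le> f'"
      using der[OF t] by blast
    have "1 \<le> exp (D * (t - a))" using D t by simp
    then have "c \<le> exp (D * (t - a)) * c" using mult_right_mono[OF _ c] by fastforce
    also have "\<dots> \<le> exp (D * (t - a)) * (D * f t + f')"
      using f'(2) by (intro mult_left_mono) auto
    finally have "0 \<le> exp (D * (t - a)) * (D * f t + f') - c" by simp
    moreover have "(G has_real_derivative exp (D * (t - a)) * (D * f t + f') - c) (at t)"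
      unfolding G_def by (auto intro!: derivative_eq_intros f'(1) simp: algebra_simps)
    ultimately show "\<exists>y. (G has_real_derivative y) (at t) \<and> 0 \<le> y" by blast
  qed (simp add: G_def continuous_intros cont)
  then have "f a + c * (b - a) \<le> exp (D * (b - a)) * f b" by (simp add: G_def)
  then have "exp (- D * (b - a)) * (f a + c * (b - a)) \<le> exp (- D * (b - a)) * (exp (D * (b - a)) * f b)"
    by (rule mult_left_mono) simp
  also have "\<dots> = f b" by (simp add: exp_minus_inverse mult.assoc[symmetric] flip: exp_add)
  finally show ?thesis .
qed

lemma first_hitting_time:
  fixes g :: "'i \<Rightarrow> real \<Rightarrow> real"
  assumes I: "finite I" and cont: "\<And>j. j \<in> I \<Longrightarrow> continuous_on {s..T} (g j)"
    and hit: "j \<in> I" "s \<le> T" "g j T \<le> 0"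
  obtains \<tau> j0 where "s \<le> \<tau>" "\<tau> \<le> T" "j0 \<in> I" "g j0 \<tau> \<le> 0"
    "\<And>j t. j \<in> I \<Longrightarrow> s \<le> t \<Longrightarrow> t < \<tau> \<Longrightarrow> g j t > 0"
proof -
  define H where "H = (\<Union>j\<in>I. {s..T} \<inter> g j -` {..0})"
  have "closed H"
    unfolding H_def using I cont by (intro closed_UN ballI continuous_closed_preimage) auto
  moreover have "bounded H" unfolding H_def by (rule bounded_subset[of "{s..T}"]) auto
  moreover have "T \<in> H" using hit unfolding H_def by auto
  ultimately obtain \<tau> where \<tau>: "\<tau> \<in> H" and least: "\<And>t. t \<in> H \<Longrightarrow> \<tau> \<le> t"
    using compact_attains_inf[of H] compact_eq_bounded_closed by blast
  then obtain j0 where "s \<le> \<tau>" "\<tau> \<le> T" "j0 \<in> I" "g j0 \<tau> \<le> 0"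
    unfolding H_def by auto
  moreover have "g j t > 0" if "j \<in> I" "s \<le> t" "t < \<tau>" for j t
    using that least[of t] \<open>\<tau> \<le> T\<close> unfolding H_def by force
  ultimately show ?thesis by (rule that)
qed

definition total_weight :: "nat \<Rightarrow> (nat \<Rightarrow> nat \<Rightarrow> real) \<Rightarrow> real" where
  "total_weight n a = (\<Sum>i<n. \<Sum>j<n. a i j)"

locale consensus_dynamics =
  fixes n :: nat and a :: "nat \<Rightarrow> nat \<Rightarrow> real" and z :: "nat \<Rightarrow> real \<Rightarrow> real"
  assumes nonneg: "\<And>i j. i < n \<Longrightarrow> j < n \<Longrightarrow> a i j \<ge> 0"
    and deriv: "\<And>i t. i < n \<Longrightarrow> t \<ge> 0 \<Longrightarrow>
       (z i has_real_derivative - (\<Sum>j<n. a i j * (z i t - z j t))) (at t within {0..})"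
begin

lemma total_weight_nonneg: "total_weight n a \<ge> 0"
  unfolding total_weight_def by (auto intro!: sum_nonneg nonneg)

lemma has_real_derivative_at:
  assumes "i < n" and "t > 0"
  shows "(z i has_real_derivative - (\<Sum>j<n. a i j * (z i t - z j t))) (at t)"
proof -
  have "(z i has_real_derivative - (\<Sum>j<n. a i j * (z i t - z j t))) (at t within {0<..})"
    using assms by (intro has_field_derivative_subset[OF deriv]) auto
  moreover have "at t within {0<..} = at t" using assms by (intro at_within_open) auto
  ultimately show ?thesis by simp
qed

lemma continuous_on_agent: "i < n \<Longrightarrow> continuous_on {0..} (z i)"
  unfolding continuous_on_eq_continuous_within using DERIV_continuous[OF deriv] by fastforce

lemma uminus: "consensus_dynamics n a (\<lambda>i t. - z i t)"
proof
  fix i t assume it: "i < n" "(0::real) \<le> t"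
  show "((\<lambda>t. - z i t) has_real_derivative - (\<Sum>j<n. a i j * (- z i t - - z j t))) (at t within {0..})"
  proof -
    have "(\<Sum>j<n. a i j * (- z i t - - z j t)) = (\<Sum>j<n. - (a i j * (z i t - z j t)))"
      by (simp add: algebra_simps)
    then have "(\<Sum>j<n. a i j * (- z i t - - z j t)) = - (\<Sum>j<n. a i j * (z i t - z j t))"
      by (simp only: sum_negf)
    then show ?thesis using DERIV_minus[OF deriv[OF it]] by simp
  qed
qed (rule nonneg)

text \<open>If some agent dropped below \<open>m\<close>, then already the perturbed values
  \<open>z j t - m + \<epsilon> e\<^sup>t\<^sup>-\<^sup>s\<close> would reach \<open>0\<close>; at the first such time the minimal agent has
  nonnegative velocity, so its perturbed value is strictly increasing there, contradicting
  positivity just before.\<close>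

lemma lower_bound_persists:
  assumes s: "s \<ge> 0" and low: "\<And>j. j < n \<Longrightarrow> m \<le> z j s" and T: "s \<le> T" and i: "i < n"
  shows "m \<le> z i T"
proof (rule ccontr)
  assume "\<not> m \<le> z i T"
  define \<epsilon> where "\<epsilon> = (m - z i T) / 2 * exp (- (T - s))"
  define g where "g j t = z j t - m + \<epsilon> * exp (t - s)" for j t
  have \<epsilon>: "\<epsilon> > 0" using \<open>\<not> m \<le> z i T\<close> by (simp add: \<epsilon>_def)
  have "g i T < 0"
    using \<open>\<not> m \<le> z i T\<close> by (simp add: g_def \<epsilon>_def mult.assoc field_simps flip: exp_add)
  moreover have "continuous_on {s..T} (g j)" if "j < n" for j
    unfolding g_def using s
    by (intro continuous_intros continuous_on_subset[OF continuous_on_agent[OF that]]) auto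
  ultimately obtain \<tau> j0 where \<tau>: "s \<le> \<tau>" "\<tau> \<le> T" "j0 < n" "g j0 \<tau> \<le> 0"
    and before: "\<And>j t. j < n \<Longrightarrow> s \<le> t \<Longrightarrow> t < \<tau> \<Longrightarrow> g j t > 0"
    using first_hitting_time[of "{..<n}" s T g i] i T by auto
  have "g j s > 0" if "j < n" for j using low[OF that] \<epsilon> by (simp add: g_def)
  then have "s < \<tau>" using \<tau> by (cases "s = \<tau>") force+
  obtain i0 where i0: "i0 < n" and i0_min: "\<And>j. j < n \<Longrightarrow> z i0 \<tau> \<le> z j \<tau>"
  proof -
    have "{..<n} \<noteq> {}" using \<tau>(3) by auto
    then obtain i0 where "is_arg_min (\<lambda>j. z j \<tau>) (\<lambda>j. j \<in> {..<n}) i0"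
      using ex_is_arg_min_if_finite[of "{..<n}" "\<lambda>j. z j \<tau>"] by blast
    then show ?thesis using that by (metis is_arg_min_def lessThan_iff not_less)
  qed
  have "(\<Sum>j<n. a i0 j * (z i0 \<tau> - z j \<tau>)) \<le> 0"
    using i0_min i0 by (intro sum_nonpos mult_nonneg_nonpos nonneg) auto
  then have "- (\<Sum>j<n. a i0 j * (z i0 \<tau> - z j \<tau>)) + \<epsilon> * exp (\<tau> - s) > 0"
    using \<epsilon> mult_pos_pos[OF \<epsilon> exp_gt_zero[of "\<tau> - s"]] by linarith
  moreover have "(g i0 has_real_derivative - (\<Sum>j<n. a i0 j * (z i0 \<tau> - z j \<tau>)) + \<epsilon> * exp (\<tau> - s)) (at \<tau>)"
    unfolding g_def using s \<open>s < \<tau>\<close>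
    by (auto intro!: derivative_eq_intros has_real_derivative_at[OF i0])
  ultimately obtain d where "d > 0" and dec: "\<And>h. 0 < h \<Longrightarrow> h < d \<Longrightarrow> g i0 (\<tau> - h) < g i0 \<tau>"
    using DERIV_pos_inc_left by blast
  define h where "h = min (d / 2) (\<tau> - s)"
  have h: "0 < h" "h < d" "s \<le> \<tau> - h" using \<open>d > 0\<close> \<open>s < \<tau>\<close> by (auto simp: h_def)
  have "g i0 \<tau> \<le> g j0 \<tau>" using i0_min[OF \<tau>(3)] by (simp add: g_def)
  then have "g i0 (\<tau> - h) < 0" using dec[OF h(1,2)] \<tau>(4) by simp
  moreover have "g i0 (\<tau> - h) > 0" using before[OF i0 h(3)] h(1) by simp
  ultimately show False by simp
qed

lemma upper_bound_persists:
  assumes "s \<ge> 0" and "\<And>j. j < n \<Longrightarrow> z j s \<le> M" and "s \<le> T" and "i < n"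
  shows "z i T \<le> M"
  using consensus_dynamics.lower_bound_persists[OF uminus, of s "- M" T i] assms by simp

lemma derivative_lower_bound:
  assumes s: "s \<ge> 0" and low: "\<And>j. j < n \<Longrightarrow> m \<le> z j s" and t: "s \<le> t"
    and i: "i < n" and p: "p < n"
  shows "- total_weight n a * (z i t - m) + a i p * (z p t - m) \<le> - (\<Sum>j<n. a i j * (z i t - z j t))"
proof -
  have above: "0 \<le> z j t - m" if "j < n" for j
    using lower_bound_persists[OF s low t that] by simp
  have "(\<Sum>j<n. a i j) * (z i t - m) - (\<Sum>j<n. a i j * (z j t - m))
      = (\<Sum>j<n. a i j * (z i t - m) - a i j * (z j t - m))"
    by (simp add: sum_distrib_right sum_subtractf)
  also have "\<dots> = (\<Sum>j<n. a i j * (z i t - z j t))"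
    by (rule sum.cong) (simp_all add: algebra_simps)
  finally have "(\<Sum>j<n. a i j * (z i t - z j t))
      = (\<Sum>j<n. a i j) * (z i t - m) - (\<Sum>j<n. a i j * (z j t - m))" ..
  moreover have "(\<Sum>j<n. a i j) * (z i t - m) \<le> total_weight n a * (z i t - m)"
    unfolding total_weight_def using i above[OF i]
    by (intro mult_right_mono member_le_sum[of i "{..<n}" "\<lambda>i. \<Sum>j<n. a i j"] sum_nonneg nonneg) auto
  moreover have "a i p * (z p t - m) \<le> (\<Sum>j<n. a i j * (z j t - m))"
    using p i above by (intro member_le_sum[of p "{..<n}" "\<lambda>j. a i j * (z j t - m)"]
        mult_nonneg_nonneg nonneg) auto
  ultimately show ?thesis by linarith
qed

lemma gap_growth:
  assumes s: "s \<ge> 0" and low: "\<And>j. j < n \<Longrightarrow> m \<le> z j s" and t0: "s \<le> t0" "t0 \<le> t"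
    and i: "i < n" and p: "p < n" and c: "c \<ge> 0"
    and feed: "\<And>\<tau>. t0 < \<tau> \<Longrightarrow> \<tau> < t \<Longrightarrow> c \<le> a i p * (z p \<tau> - m)"
  shows "exp (- total_weight n a * (t - t0)) * (z i t0 - m + c * (t - t0)) \<le> z i t - m"
proof (rule differential_inequality_lower_bound[OF t0(2) total_weight_nonneg c])
  show "continuous_on {t0..t} (\<lambda>t. z i t - m)"
    using s t0 by (intro continuous_intros continuous_on_subset[OF continuous_on_agent[OF i]]) auto
next
  fix \<tau> assume \<tau>: "t0 < \<tau>" "\<tau> < t"
  have "((\<lambda>t. z i t - m) has_real_derivative - (\<Sum>j<n. a i j * (z i \<tau> - z j \<tau>))) (at \<tau>)"
    using has_real_derivative_at[OF i, of \<tau>] \<tau> s t0 by (auto intro!: derivative_eq_intros)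
  moreover have "- total_weight n a * (z i \<tau> - m) + c \<le> - (\<Sum>j<n. a i j * (z i \<tau> - z j \<tau>))"
    using derivative_lower_bound[OF s low _ i p, of \<tau>] feed[OF \<tau>] \<tau> t0 by simp
  ultimately show "\<exists>f'. ((\<lambda>t. z i t - m) has_real_derivative f') (at \<tau>) \<and>
      - total_weight n a * (z i \<tau> - m) + c \<le> f'" by blast
qed

end

locale rooted_tree =
  fixes n :: nat and a :: "nat \<Rightarrow> nat \<Rightarrow> real" and k :: nat and par :: "nat \<Rightarrow> nat"
  assumes root: "k < n"
    and parent: "\<And>i. i < n \<Longrightarrow> i \<noteq> k \<Longrightarrow> par i < n \<and> a i (par i) > 0"
    and reaches_root: "\<And>i. i < n \<Longrightarrow> i \<noteq> k \<Longrightarrow> \<exists>m. (par ^^ m) i = k"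

lemma has_directed_spanning_tree_iff:
  "has_directed_spanning_tree n a \<longleftrightarrow> (\<exists>k par. rooted_tree n a k par)"
  unfolding has_directed_spanning_tree_def rooted_tree_def by blast

context rooted_tree
begin

definition depth :: "nat \<Rightarrow> nat" where
  "depth i = (LEAST m. (par ^^ m) i = k)"

definition height :: nat where
  "height = Max (depth ` {..<n})"

definition min_edge_weight :: real where
  "min_edge_weight = Min (insert 1 ((\<lambda>i. a i (par i)) ` {i. i < n \<and> i \<noteq> k}))"

text \<open>Within one window of length \<open>horizon\<close> a lead of the root propagates along the tree
  to agents of depth \<open>l\<close>, attenuated to the fraction \<open>gain l\<close>.\<close>

definition horizon :: real where
  "horizon = real height + 1"

definition decay :: real where
  "decay = exp (- total_weight n a * horizon)"

definition gain :: "nat \<Rightarrow> real" where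
  "gain l = decay / 2 * (decay * min_edge_weight) ^ l"

lemma depth_root [simp]: "depth k = 0"
  by (simp add: depth_def)

lemma funpow_depth: "i < n \<Longrightarrow> (par ^^ depth i) i = k"
  using reaches_root[of i] by (cases "i = k") (auto simp: depth_def intro: LeastI)

lemma depth_parent:
  assumes "i < n" "i \<noteq> k"
  shows "depth (par i) < depth i"
proof -
  obtain d where d: "depth i = Suc d"
    using funpow_depth[OF assms(1)] assms(2) by (cases "depth i") auto
  then have "(par ^^ d) (par i) = k"
    using funpow_depth[OF assms(1)] by (simp add: funpow_Suc_right del: funpow.simps)
  then have "depth (par i) \<le> d" unfolding depth_def by (rule Least_le)
  then show ?thesis using d by simp
qed

lemma depth_le_height: "i < n \<Longrightarrow> depth i \<le> height"
  by (simp add: height_def)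

lemma min_edge_weight_pos: "min_edge_weight > 0"
  unfolding min_edge_weight_def using parent by (subst Min_gr_iff) auto

lemma min_edge_weight_le_1: "min_edge_weight \<le> 1"
  unfolding min_edge_weight_def by (intro Min_le) auto

lemma min_edge_weight_le: "i < n \<Longrightarrow> i \<noteq> k \<Longrightarrow> min_edge_weight \<le> a i (par i)"
  unfolding min_edge_weight_def by (intro Min_le) auto

end

locale tree_consensus = consensus_dynamics n a z + rooted_tree n a k par
  for n :: nat and a :: "nat \<Rightarrow> nat \<Rightarrow> real" and z :: "nat \<Rightarrow> real \<Rightarrow> real"
    and k :: nat and par :: "nat \<Rightarrow> nat"
begin

lemma decay_pos: "decay > 0" and decay_le_1: "decay \<le> 1"
  using total_weight_nonneg by (simp_all add: decay_def horizon_def)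

lemma decay_le_exp: "t \<le> horizon \<Longrightarrow> decay \<le> exp (- total_weight n a * t)"
  using total_weight_nonneg by (simp add: decay_def mult_left_mono)

lemma gain_pos: "gain l > 0"
  using decay_pos min_edge_weight_pos by (simp add: gain_def)

lemma gain_Suc_le: "gain (Suc l) \<le> gain l"
proof -
  have "decay * min_edge_weight \<le> 1"
    using decay_pos decay_le_1 min_edge_weight_pos min_edge_weight_le_1 by (simp add: mult_le_one)
  then show ?thesis
    using decay_pos min_edge_weight_pos
    by (simp add: gain_def mult_left_le power_le_one mult_left_mono)
qed

lemma gain_le_half: "gain l \<le> 1/2"
proof (induction l)
  case 0 then show ?case using decay_le_1 by (simp add: gain_def)
next
  case (Suc l) then show ?case using gain_Suc_le[of l] by simp
qed

lemma root_gap_persists: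
  assumes s: "s \<ge> 0" and low: "\<And>j. j < n \<Longrightarrow> m \<le> z j s" and t: "s \<le> t" "t \<le> s + horizon"
  shows "decay * (z k s - m) \<le> z k t - m"
proof -
  have "0 \<le> a k k * (z k \<tau> - m)" if "s < \<tau>" for \<tau>
    using nonneg[OF root root] lower_bound_persists[OF s low _ root, of \<tau>] that by simp
  then have "exp (- total_weight n a * (t - s)) * (z k s - m) \<le> z k t - m"
    using gap_growth[OF s low _ _ root root, of s t 0] t by simp
  moreover have "decay * (z k s - m) \<le> exp (- total_weight n a * (t - s)) * (z k s - m)"
    using decay_le_exp[of "t - s"] low[OF root] t by (intro mult_right_mono) auto
  ultimately show ?thesis by simp
qed

lemma gap_passes_to_child:
  assumes s: "s \<ge> 0" and low: "\<And>j. j < n \<Longrightarrow> m \<le> z j s" and i: "i < n" "i \<noteq> k"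
    and t: "s \<le> t0" "t0 + 1 \<le> t" "t \<le> s + horizon" and G: "G \<ge> 0"
    and feed: "\<And>\<tau>. t0 < \<tau> \<Longrightarrow> \<tau> < t \<Longrightarrow> G \<le> z (par i) \<tau> - m"
  shows "decay * (min_edge_weight * G) \<le> z i t - m"
proof -
  define c where "c = min_edge_weight * G"
  have c: "c \<ge> 0" using min_edge_weight_pos G by (simp add: c_def)
  have "c \<le> a i (par i) * (z (par i) \<tau> - m)" if "t0 < \<tau>" "\<tau> < t" for \<tau>
    unfolding c_def using feed[OF that] G min_edge_weight_pos min_edge_weight_le[OF i]
    by (intro mult_mono) auto
  then have "exp (- total_weight n a * (t - t0)) * (z i t0 - m + c * (t - t0)) \<le> z i t - m"
    using gap_growth[OF s low _ _ i(1) conjunct1[OF parent[OF i]] c] t by simp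
  moreover have "c * 1 \<le> c * (t - t0)" using t c by (intro mult_left_mono) auto
  then have "c \<le> z i t0 - m + c * (t - t0)"
    using lower_bound_persists[OF s low t(1) i(1)] by simp
  then have "decay * c \<le> exp (- total_weight n a * (t - t0)) * (z i t0 - m + c * (t - t0))"
    using decay_le_exp[of "t - t0"] t decay_pos c by (intro mult_mono) auto
  ultimately show ?thesis by (simp add: c_def)
qed

lemma propagation:
  assumes s: "s \<ge> 0" and low: "\<And>j. j < n \<Longrightarrow> m \<le> z j s" and mM: "m \<le> M"
    and root_high: "(M - m) / 2 \<le> z k s - m"
  shows "i < n \<Longrightarrow> depth i \<le> l \<Longrightarrow> s + real l \<le> t \<Longrightarrow> t \<le> s + horizon \<Longrightarrow>
    gain l * (M - m) \<le> z i t - m"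
proof (induction l arbitrary: i t)
  case 0
  then have "i = k" using depth_parent[of i] by (cases "i = k") auto
  moreover have "gain 0 * (M - m) \<le> decay * (z k s - m)"
    using root_high decay_pos by (simp add: gain_def)
  ultimately show ?case using root_gap_persists[OF s low, of t] 0 by simp
next
  case (Suc l)
  show ?case
  proof (cases "depth i \<le> l")
    case True
    then have "gain l * (M - m) \<le> z i t - m" using Suc by simp
    moreover have "gain (Suc l) * (M - m) \<le> gain l * (M - m)"
      using gain_Suc_le mM by (intro mult_right_mono) auto
    ultimately show ?thesis by simp
  next
    case False
    then have "i \<noteq> k" by (metis depth_root zero_le)
    then have "depth (par i) \<le> l" "par i < n"
      using depth_parent[OF Suc.prems(1)] parent[OF Suc.prems(1)] Suc.prems(2) by auto
    then have "decay * (min_edge_weight * (gain l * (M - m))) \<le> z i t - m"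
      using Suc.IH Suc.prems gain_pos[of l] mM
      by (intro gap_passes_to_child[OF s low Suc.prems(1) \<open>i \<noteq> k\<close>, of "s + real l"]) auto
    then show ?thesis by (simp add: gain_def mult_ac)
  qed
qed

lemma spread_contracts:
  assumes s: "s \<ge> 0" and bounds: "\<And>j. j < n \<Longrightarrow> m \<le> z j s \<and> z j s \<le> M"
  obtains m' M' where "M' - m' \<le> (1 - gain height) * (M - m)"
    "\<And>j. j < n \<Longrightarrow> m' \<le> z j (s + horizon) \<and> z j (s + horizon) \<le> M'"
proof -
  have mM: "m \<le> M" using bounds[OF root] by linarith
  have later: "s \<le> s + horizon" by (simp add: horizon_def)
  have lifted: "m + gain height * (M - m) \<le> z j (s + horizon)"
    if "(M - m) / 2 \<le> z k s - m" "j < n" for j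
    using propagation[OF s _ mM that(1) that(2) depth_le_height[OF that(2)], of "s + horizon"] bounds
    by (simp add: horizon_def)
  show ?thesis
  proof (cases "(M - m) / 2 \<le> z k s - m")
    case True
    show ?thesis
      by (rule that[where m' = "m + gain height * (M - m)" and M' = M])
        (use lifted[OF True] upper_bound_persists[OF s _ later] bounds in \<open>auto simp: algebra_simps\<close>)
  next
    case False
    interpret neg: tree_consensus n a "\<lambda>i t. - z i t" k par
      by (intro tree_consensus.intro uminus rooted_tree_axioms)
    have "- M + gain height * (- m - - M) \<le> - z j (s + horizon)" if "j < n" for j
      using neg.propagation[OF s _ _ _ that depth_le_height[OF that], of "- M" "- m" "s + horizon"]
        bounds False mM by (simp add: horizon_def)
    then show ?thesis
      by (intro that[where m' = m and M' = "M - gain height * (M - m)"])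
        (use lower_bound_persists[OF s _ later] bounds in \<open>auto simp: algebra_simps\<close>)
  qed
qed

lemma spread_decays:
  fixes B :: real
  assumes "\<And>j. j < n \<Longrightarrow> \<bar>z j 0\<bar> \<le> B"
  obtains m M where "M - m \<le> (1 - gain height) ^ N * (2 * B)"
    "\<And>j. j < n \<Longrightarrow> m \<le> z j (real N * horizon) \<and> z j (real N * horizon) \<le> M"
proof (induction N arbitrary: thesis)
  case 0
  have "- B \<le> z j 0 \<and> z j 0 \<le> B" if "j < n" for j
    using assms[OF that] by (simp add: abs_le_iff)
  then show ?case by (intro 0[where m = "- B" and M = B]) auto
next
  case (Suc N)
  obtain m M where mM: "M - m \<le> (1 - gain height) ^ N * (2 * B)"
    and bounds: "\<And>j. j < n \<Longrightarrow> m \<le> z j (real N * horizon) \<and> z j (real N * horizon) \<le> M"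
    using Suc.IH by blast
  have "real N * horizon \<ge> 0" by (simp add: horizon_def)
  then obtain m' M' where spread: "M' - m' \<le> (1 - gain height) * (M - m)"
    and "\<And>j. j < n \<Longrightarrow> m' \<le> z j (real N * horizon + horizon) \<and> z j (real N * horizon + horizon) \<le> M'"
    using spread_contracts[OF _ bounds] by metis
  moreover have "real (Suc N) * horizon = real N * horizon + horizon" by (simp add: algebra_simps)
  moreover have "(1 - gain height) * (M - m) \<le> (1 - gain height) ^ Suc N * (2 * B)"
    using mult_left_mono[OF mM, of "1 - gain height"] gain_le_half[of height] by (simp add: mult.assoc)
  ultimately show ?case by (intro Suc.prems[where m = m' and M = M']) auto
qed

theorem consensus:
  assumes i: "i < n" and j: "j < n"
  shows "((\<lambda>t. z i t - z j t) \<longlongrightarrow> 0) at_top"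
  unfolding tendsto_iff
proof (intro allI impI)
  fix e :: real assume "e > 0"
  define B where "B = (\<Sum>l<n. \<bar>z l 0\<bar>)"
  have B: "\<bar>z l 0\<bar> \<le> B" if "l < n" for l
    unfolding B_def using that by (intro member_le_sum) auto
  have "(\<lambda>N. (1 - gain height) ^ N * (2 * B)) \<longlonglongrightarrow> 0"
    using gain_pos[of height] gain_le_half[of height] by (intro tendsto_mult_left_zero LIMSEQ_power_zero) auto
  then obtain N where "norm ((1 - gain height) ^ N * (2 * B) - 0) < e"
    using LIMSEQ_D \<open>e > 0\<close> by blast
  then have N: "(1 - gain height) ^ N * (2 * B) < e" by (simp add: abs_less_iff)
  obtain m M where spread: "M - m \<le> (1 - gain height) ^ N * (2 * B)"
    and bounds: "\<And>l. l < n \<Longrightarrow> m \<le> z l (real N * horizon) \<and> z l (real N * horizon) \<le> M"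
    using spread_decays[OF B, where N = N] by metis
  have "real N * horizon \<ge> 0" by (simp add: horizon_def)
  then have "m \<le> z l t \<and> z l t \<le> M" if "l < n" "t \<ge> real N * horizon" for l t
    using lower_bound_persists[OF _ _ that(2) that(1)] upper_bound_persists[OF _ _ that(2) that(1)]
      bounds by blast
  then have "\<bar>z i t - z j t\<bar> < e" if "t \<ge> real N * horizon" for t
  proof -
    have "m \<le> z i t \<and> z i t \<le> M" "m \<le> z j t \<and> z j t \<le> M"
      using i j that \<open>\<And>l t. _ \<Longrightarrow> _ \<Longrightarrow> m \<le> z l t \<and> z l t \<le> M\<close> by blast+
    then show ?thesis using spread N by (simp add: abs_less_iff)
  qed
  then show "\<forall>\<^sub>F t in at_top. dist (z i t - z j t) 0 < e"
    unfolding eventually_at_top_linorder dist_real_def by auto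
qed

end

lemma vector_consensus:
  fixes Y :: "nat \<Rightarrow> real \<Rightarrow> 'v::euclidean_space"
  assumes tree: "rooted_tree n a k par" and nonneg: "\<And>i j. i < n \<Longrightarrow> j < n \<Longrightarrow> a i j \<ge> 0"
    and dyn: "\<And>i t. i < n \<Longrightarrow> t \<ge> 0 \<Longrightarrow>
      (Y i has_vector_derivative - (\<Sum>j<n. a i j *\<^sub>R (Y i t - Y j t))) (at t within {0..})"
    and i: "i < n" and j: "j < n"
  shows "((\<lambda>t. Y i t - Y j t) \<longlongrightarrow> 0) at_top"
proof -
  have "((\<lambda>t. (Y i t - Y j t) \<bullet> b) \<longlongrightarrow> 0) at_top" for b
  proof -
    interpret tree_consensus n a "\<lambda>i t. Y i t \<bullet> b" k par
    proof (intro tree_consensus.intro consensus_dynamics.intro tree nonneg)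
      fix i t assume "i < n" "(0::real) \<le> t"
      from bounded_linear.has_vector_derivative[OF bounded_linear_inner_left dyn[OF this]]
      show "((\<lambda>t. Y i t \<bullet> b) has_real_derivative - (\<Sum>j<n. a i j * (Y i t \<bullet> b - Y j t \<bullet> b)))
          (at t within {0..})"
        by (simp add: has_real_derivative_iff_has_vector_derivative inner_sum_left inner_diff_left)
    qed
    show ?thesis using consensus[OF i j] by (simp add: inner_diff_left)
  qed
  then have "((\<lambda>t. \<Sum>b\<in>Basis. ((Y i t - Y j t) \<bullet> b) *\<^sub>R b) \<longlongrightarrow> (\<Sum>b\<in>Basis. 0 *\<^sub>R b)) at_top"
    by (intro tendsto_sum tendsto_scaleR tendsto_const)
  then show ?thesis by (simp add: euclidean_representation)
qed

lemma output_consensus_of_spanning_tree: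
  assumes nonneg: "\<And>i j. i < n \<Longrightarrow> j < n \<Longrightarrow> a i j \<ge> 0"
    and tree: "has_directed_spanning_tree n a"
  shows "achieves_output_consensus n a"
  unfolding achieves_output_consensus_def
proof (rule allI, rule impI)
  fix x assume x: "closed_loop_solution n a x"
  obtain k par where "rooted_tree n a k par"
    using tree has_directed_spanning_tree_iff by blast
  from vector_consensus[OF this nonneg closed_loop_log_dynamics[OF x]]
  show "\<forall>i<n. \<forall>j<n. ((\<lambda>t. dq_log (x i t) - dq_log (x j t)) \<longlongrightarrow> 0) at_top"
    by blast
qed

section \<open>Graphs without a spanning tree\<close>

definition reaches :: "nat \<Rightarrow> (nat \<Rightarrow> nat \<Rightarrow> real) \<Rightarrow> nat \<Rightarrow> nat \<Rightarrow> bool" where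
  "reaches n a = (\<lambda>j i. j < n \<and> i < n \<and> a i j > 0)\<^sup>*\<^sup>*"

lemma rtranclp_closer_predecessor:
  fixes E :: "'a \<Rightarrow> 'a \<Rightarrow> bool"
  assumes "E\<^sup>*\<^sup>* b i" and "i \<noteq> b"
  obtains j where "E j i" "E\<^sup>*\<^sup>* b j" "(LEAST m. (E ^^ m) b j) < (LEAST m. (E ^^ m) b i)"
proof -
  define d where "d x = (LEAST m. (E ^^ m) b x)" for x
  have "(E ^^ d i) b i"
    using rtranclp_imp_relpowp[OF assms(1)] unfolding d_def by (metis LeastI)
  moreover obtain d' where d': "d i = Suc d'"
    using calculation assms(2) by (cases "d i") auto
  ultimately obtain j where j: "(E ^^ d') b j" "E j i" by (metis relpowp_Suc_E)
  have "d j \<le> d'" unfolding d_def using j(1) by (rule Least_le)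
  then show ?thesis using that[OF j(2) relpowp_imp_rtranclp[OF j(1)]] d' by (simp add: d_def)
qed

text \<open>Parents are chosen one step closer to the root in breadth-first distance.\<close>

lemma spanning_tree_of_root:
  assumes b: "b < n" and all: "\<And>i. i < n \<Longrightarrow> reaches n a b i"
  shows "has_directed_spanning_tree n a"
proof -
  define E where "E = (\<lambda>j i. j < n \<and> i < n \<and> a i j > 0)"
  define dist where "dist i = (LEAST m. (E ^^ m) b i)" for i
  define par where "par i = (SOME j. E j i \<and> E\<^sup>*\<^sup>* b j \<and> dist j < dist i)" for i
  have par: "E (par i) i \<and> dist (par i) < dist i" if "i < n" "i \<noteq> b" for i
  proof -
    have "E\<^sup>*\<^sup>* b i" using all[OF that(1)] by (simp add: reaches_def E_def)
    then have "\<exists>j. E j i \<and> E\<^sup>*\<^sup>* b j \<and> dist j < dist i"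
      using rtranclp_closer_predecessor that(2) unfolding dist_def by metis
    then show ?thesis unfolding par_def by (metis (mono_tags, lifting) someI_ex)
  qed
  have to_root: "\<exists>m. (par ^^ m) i = b" if "i < n" for i
    using that
  proof (induction "dist i" arbitrary: i rule: less_induct)
    case less
    show ?case
    proof (cases "i = b")
      case True
      then show ?thesis by (intro exI[of _ 0]) simp
    next
      case False
      have "par i < n" using par[OF less.prems False] by (simp add: E_def)
      then obtain m where "(par ^^ m) (par i) = b"
        using less.hyps par[OF less.prems False] by blast
      then have "(par ^^ Suc m) i = b" by (simp add: funpow_Suc_right del: funpow.simps)
      then show ?thesis by blast
    qed
  qed
  have "rooted_tree n a b par"
  proof
    fix i assume i: "i < n" "i \<noteq> b"
    show "par i < n \<and> a i (par i) > 0" using par[OF i] by (simp add: E_def)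
    show "\<exists>m. (par ^^ m) i = b" using to_root[OF i(1)] .
  qed (rule b)
  then show ?thesis using has_directed_spanning_tree_iff by blast
qed

lemma reaches_refl: "reaches n a i i"
  by (simp add: reaches_def)

lemma reaches_edge: "j < n \<Longrightarrow> i < n \<Longrightarrow> a i j > 0 \<Longrightarrow> reaches n a j i"
  by (simp add: reaches_def r_into_rtranclp)

lemma reaches_trans: "reaches n a h i \<Longrightarrow> reaches n a i j \<Longrightarrow> reaches n a h j"
  unfolding reaches_def by (rule rtranclp_trans)

text \<open>The agents \<open>C\<close> that reach a node with the fewest ancestors form a closed strong
  component; without a spanning tree some agents \<open>D\<close> are not reached from it.\<close>

lemma closed_groups_of_no_spanning_tree:
  assumes n: "n \<ge> 1" and no_tree: "\<not> has_directed_spanning_tree n a"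
  obtains C D where "C \<subseteq> {..<n}" "D \<subseteq> {..<n}" "C \<noteq> {}" "D \<noteq> {}" "C \<inter> D = {}"
    "\<And>i j. i \<in> C \<Longrightarrow> j < n \<Longrightarrow> a i j > 0 \<Longrightarrow> j \<in> C"
    "\<And>i j. i \<in> D \<Longrightarrow> j < n \<Longrightarrow> a i j > 0 \<Longrightarrow> j \<in> D"
proof -
  define Anc where "Anc x = {j. j < n \<and> reaches n a j x}" for x
  obtain b where b: "b < n" and b_min: "\<And>c. c < n \<Longrightarrow> card (Anc b) \<le> card (Anc c)"
    using ex_has_least_nat[of "\<lambda>c. c < n" 0 "\<lambda>c. card (Anc c)"] n by auto
  define C where "C = Anc b"
  define D where "D = {i. i < n \<and> \<not> reaches n a b i}"
  have "reaches n a b c" if "c \<in> C" for c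
  proof -
    have c: "c < n" "reaches n a c b" using that by (auto simp: C_def Anc_def)
    then have "Anc c \<subseteq> Anc b" unfolding Anc_def using reaches_trans[OF _ c(2)] by blast
    then have "Anc c = Anc b" using b_min[OF c(1)] by (intro card_seteq) (auto simp: Anc_def)
    moreover have "b \<in> Anc b" using b by (simp add: Anc_def reaches_refl)
    ultimately have "b \<in> Anc c" by simp
    then show ?thesis by (simp add: Anc_def)
  qed
  then have disjoint: "C \<inter> D = {}" by (auto simp: D_def)
  have "b \<in> C" using b by (simp add: C_def Anc_def reaches_refl)
  moreover have "D \<noteq> {}" using spanning_tree_of_root[OF b] no_tree by (auto simp: D_def)
  moreover have "j \<in> C" if "i \<in> C" "j < n" "a i j > 0" for i j
  proof -
    have "i < n" "reaches n a i b" using that(1) by (auto simp: C_def Anc_def)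
    then show ?thesis
      using reaches_trans[OF reaches_edge[where a = a, OF that(2) \<open>i < n\<close> that(3)]] that(2)
      by (simp add: C_def Anc_def)
  qed
  moreover have "j \<in> D" if "i \<in> D" "j < n" "a i j > 0" for i j
  proof -
    have "i < n" "\<not> reaches n a b i" using that(1) by (auto simp: D_def)
    then show ?thesis
      using reaches_trans[OF _ reaches_edge[where a = a, OF that(2) \<open>i < n\<close> that(3)]] that(2)
      by (auto simp: D_def)
  qed
  moreover have "C \<subseteq> {..<n}" "D \<subseteq> {..<n}" by (auto simp: C_def Anc_def D_def)
  ultimately show ?thesis using that[OF _ _ _ _ disjoint] by blast
qed

text \<open>An agent without in-neighbours gets average \<open>0\<close> (division by zero).\<close>

definition neighbour_average :: "nat \<Rightarrow> (nat \<Rightarrow> nat \<Rightarrow> real) \<Rightarrow> (nat \<Rightarrow> real) \<Rightarrow> nat \<Rightarrow> real" where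
  "neighbour_average n a y i = (\<Sum>j<n. a i j * y j) / (\<Sum>j<n. a i j)"

context
  fixes n :: nat and a :: "nat \<Rightarrow> nat \<Rightarrow> real" and i :: nat
  assumes row_nonneg: "\<And>j. j < n \<Longrightarrow> a i j \<ge> 0"
begin

lemma neighbour_average_mono:
  assumes "\<And>j. y j \<le> y' j"
  shows "neighbour_average n a y i \<le> neighbour_average n a y' i"
proof -
  have "(\<Sum>j<n. a i j * y j) \<le> (\<Sum>j<n. a i j * y' j)"
    using assms row_nonneg by (intro sum_mono mult_left_mono) auto
  moreover have "0 \<le> (\<Sum>j<n. a i j)" using row_nonneg by (intro sum_nonneg) auto
  ultimately show ?thesis unfolding neighbour_average_def by (rule divide_right_mono)
qed

lemma neighbour_average_bounds:
  assumes "\<And>j. 0 \<le> y j \<and> y j \<le> 1"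
  shows "0 \<le> neighbour_average n a y i \<and> neighbour_average n a y i \<le> 1"
proof -
  have "(\<Sum>j<n. a i j * y j) \<le> (\<Sum>j<n. a i j)"
    using assms row_nonneg by (intro sum_mono) (simp add: mult_left_le)
  moreover have "0 \<le> (\<Sum>j<n. a i j * y j)"
    using assms row_nonneg by (intro sum_nonneg mult_nonneg_nonneg) auto
  ultimately show ?thesis
    unfolding neighbour_average_def
    by (cases "(\<Sum>j<n. a i j) = 0") (auto simp: divide_le_eq_1 intro: divide_nonneg_nonneg)
qed

lemma laplacian_row_eq_0:
  assumes "y i = neighbour_average n a y i"
  shows "(\<Sum>j<n. a i j * (y i - y j)) = 0"
proof (cases "(\<Sum>j<n. a i j) = 0")
  case True
  then have "a i j = 0" if "j < n" for j
    using sum_nonneg_eq_0_iff[of "{..<n}" "a i"] row_nonneg that by auto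
  then show ?thesis by simp
next
  case False
  then have "y i * (\<Sum>j<n. a i j) = (\<Sum>j<n. a i j * y j)"
    using assms by (simp add: neighbour_average_def)
  then show ?thesis by (simp add: right_diff_distrib sum_subtractf sum_distrib_left mult.commute)
qed

lemma laplacian_row_eq_0_of_closed:
  assumes "i \<in> G" and "\<And>j. j < n \<Longrightarrow> a i j > 0 \<Longrightarrow> j \<in> G" and "\<And>j. j \<in> G \<Longrightarrow> y j = c"
  shows "(\<Sum>j<n. a i j * (y i - y j)) = 0"
proof (intro sum.neutral ballI)
  fix j assume "j \<in> {..<n}"
  then show "a i j * (y i - y j) = 0"
    using row_nonneg[of j] assms by (cases "a i j > 0") auto
qed

end

lemma tendsto_neighbour_average:
  "(\<And>j. (\<lambda>k. y k j) \<longlonglongrightarrow> Y j) \<Longrightarrow> (\<lambda>k. neighbour_average n a (y k) i) \<longlonglongrightarrow> neighbour_average n a Y i"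
  unfolding neighbour_average_def divide_inverse
  by (intro tendsto_mult_right tendsto_sum tendsto_mult_left)

text \<open>Iterating the averaging map from the zero function gives an increasing sequence bounded
  by \<open>1\<close>, whose limit is a fixed point.\<close>

lemma harmonic_extension:
  fixes n :: nat and a :: "nat \<Rightarrow> nat \<Rightarrow> real"
  assumes nonneg: "\<And>i j. i < n \<Longrightarrow> j < n \<Longrightarrow> a i j \<ge> 0"
    and g: "\<And>i. i \<in> B \<Longrightarrow> 0 \<le> g i \<and> g i \<le> 1"
  obtains Y where "\<And>i. i \<in> B \<Longrightarrow> Y i = g i"
    "\<And>i. i < n \<Longrightarrow> i \<notin> B \<Longrightarrow> (\<Sum>j<n. a i j * (Y i - Y j)) = 0"
proof -
  define T where "T y i = (if i \<in> B then g i else if i < n then neighbour_average n a y i else 0)"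
    for y i
  define ys where "ys k = (T ^^ k) (\<lambda>_. 0)" for k
  have T_mono: "T y i \<le> T y' i" if "\<And>j. y j \<le> y' j" for y y' i
    using neighbour_average_mono[OF nonneg] that by (simp add: T_def)
  have T_bounds: "0 \<le> T y i \<and> T y i \<le> 1" if "\<And>j. 0 \<le> y j \<and> y j \<le> 1" for y i
    using neighbour_average_bounds[OF nonneg] g that by (simp add: T_def)
  have ys_bounds: "0 \<le> ys k i \<and> ys k i \<le> 1" for k i
    by (induction k arbitrary: i) (simp_all add: ys_def T_bounds)
  have ys_mono: "ys k i \<le> ys (Suc k) i" for k i
  proof (induction k arbitrary: i)
    case 0 then show ?case using ys_bounds[of 1 i] by (simp add: ys_def)
  next
    case (Suc k) then show ?case by (simp add: ys_def T_mono)
  qed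
  define Y where "Y i = (SUP k. ys k i)" for i
  have lim: "(\<lambda>k. ys k i) \<longlonglongrightarrow> Y i" for i
    unfolding Y_def using ys_bounds ys_mono
    by (intro LIMSEQ_incseq_SUP bdd_aboveI[of _ 1] incseq_SucI) auto
  have "(\<lambda>k. ys (Suc k) i) \<longlonglongrightarrow> T Y i" for i
    using tendsto_neighbour_average[OF lim] by (simp add: ys_def T_def)
  then have fixed: "Y i = T Y i" for i
    using LIMSEQ_unique[OF LIMSEQ_Suc[OF lim]] by blast
  show ?thesis
  proof (rule that)
    show "Y i = g i" if "i \<in> B" for i using fixed[of i] that by (simp add: T_def)
    show "(\<Sum>j<n. a i j * (Y i - Y j)) = 0" if "i < n" "i \<notin> B" for i
      using fixed[of i] that by (intro laplacian_row_eq_0[OF nonneg]) (simp_all add: T_def)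
  qed
qed

lemma laplacian_kernel_of_no_spanning_tree:
  assumes n: "n \<ge> 1" and nonneg: "\<And>i j. i < n \<Longrightarrow> j < n \<Longrightarrow> a i j \<ge> 0"
    and no_tree: "\<not> has_directed_spanning_tree n a"
  obtains Y b d where "b < n" "d < n" "Y b = 1" "Y d = 0"
    "\<And>i. i < n \<Longrightarrow> (\<Sum>j<n. a i j * (Y i - Y j)) = 0"
proof (rule closed_groups_of_no_spanning_tree[OF n no_tree])
  fix C D
  assume CD: "C \<subseteq> {..<n}" "D \<subseteq> {..<n}" "C \<noteq> {}" "D \<noteq> {}" "C \<inter> D = {}"
    and C_closed: "\<And>i j. i \<in> C \<Longrightarrow> j < n \<Longrightarrow> a i j > 0 \<Longrightarrow> j \<in> C"
    and D_closed: "\<And>i j. i \<in> D \<Longrightarrow> j < n \<Longrightarrow> a i j > 0 \<Longrightarrow> j \<in> D"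
  define g :: "nat \<Rightarrow> real" where "g i = (if i \<in> C then 1 else 0)" for i
  show ?thesis
  proof (rule harmonic_extension[where n = n and a = a and B = "C \<union> D" and g = g, OF nonneg])
    show "0 \<le> g i \<and> g i \<le> 1" for i by (simp add: g_def)
  next
    fix Y assume Y: "\<And>i. i \<in> C \<union> D \<Longrightarrow> Y i = g i"
      and harmonic: "\<And>i. i < n \<Longrightarrow> i \<notin> C \<union> D \<Longrightarrow> (\<Sum>j<n. a i j * (Y i - Y j)) = 0"
    have Y_C: "Y j = 1" if "j \<in> C" for j using Y that by (simp add: g_def)
    have Y_D: "Y j = 0" if "j \<in> D" for j using Y that CD(5) by (auto simp: g_def)
    have "(\<Sum>j<n. a i j * (Y i - Y j)) = 0" if "i < n" for i
    proof (cases "i \<in> C \<union> D")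
      case True
      then consider "i \<in> C" | "i \<in> D" by blast
      then show ?thesis
      proof cases
        case 1
        then show ?thesis
          using laplacian_row_eq_0_of_closed[where G = C and c = 1] nonneg that C_closed Y_C by blast
      next
        case 2
        then show ?thesis
          using laplacian_row_eq_0_of_closed[where G = D and c = 0] nonneg that D_closed Y_D by blast
      qed
    qed (rule harmonic[OF that])
    moreover obtain b d where "b \<in> C" "d \<in> D" using CD by blast
    ultimately show ?thesis using that[of b d Y] Y_C Y_D CD(1,2) by blast
  qed
qed

definition translation_pose :: "real^3 \<Rightarrow> dq" where
  "translation_pose p = (qone, (1/2) *\<^sub>R hmul (pure p) qone)"

lemma unit_dq_translation_pose: "unit_dq (translation_pose p)"
  unfolding unit_dq_def translation_pose_def
  by (rule exI[of _ qone], rule exI[of _ p])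
    (auto intro!: exI[of _ 0] exI[of _ "axis 1 1"])

lemma dq_log_translation_pose: "dq_log (translation_pose p) = (0, (1/2) *\<^sub>R p)"
  by (simp add: translation_pose_def dq_log_def dq_rot_def dq_trans_def qlog_def
      linear_scale[OF linear_im])

lemma Q8_0 [simp]: "Q8 x 0 = 0"
  by (simp add: Q8_def Let_def zero_prod_def)

lemma translation_equilibrium:
  fixes P :: "nat \<Rightarrow> real^3"
  assumes "\<And>i. i < n \<Longrightarrow> (\<Sum>j<n. a i j *\<^sub>R (P i - P j)) = 0"
  shows "closed_loop_solution n a (\<lambda>i t. translation_pose (2 *\<^sub>R P i))"
proof -
  have "(\<Sum>j<n. a i j *\<^sub>R (dq_log (translation_pose (2 *\<^sub>R P i)) - dq_log (translation_pose (2 *\<^sub>R P j))))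
      = (0, \<Sum>j<n. a i j *\<^sub>R (P i - P j))" for i
    by (simp add: dq_log_translation_pose prod_eq_iff fst_sum snd_sum)
  then have "(\<Sum>j<n. a i j *\<^sub>R (dq_log (translation_pose (2 *\<^sub>R P i))
      - dq_log (translation_pose (2 *\<^sub>R P j)))) = 0" if "i < n" for i
    using assms[OF that] by (simp add: zero_prod_def)
  then show ?thesis by (simp add: closed_loop_solution_def unit_dq_translation_pose)
qed

lemma no_output_consensus_of_no_spanning_tree:
  assumes n: "n \<ge> 1" and nonneg: "\<And>i j. i < n \<Longrightarrow> j < n \<Longrightarrow> a i j \<ge> 0"
    and no_tree: "\<not> has_directed_spanning_tree n a"
  shows "\<not> achieves_output_consensus n a"
proof (rule laplacian_kernel_of_no_spanning_tree[OF n nonneg no_tree])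
  fix Y b d assume bd: "b < n" "d < n" "Y b = 1" "Y d = 0"
    and kernel: "\<And>i. i < n \<Longrightarrow> (\<Sum>j<n. a i j * (Y i - Y j)) = 0"
  define x where "x i t = translation_pose (2 *\<^sub>R (Y i *\<^sub>R axis 1 1))" for i and t :: real
  have "(\<Sum>j<n. a i j *\<^sub>R (Y i *\<^sub>R axis 1 1 - Y j *\<^sub>R axis 1 1)) = 0" if "i < n" for i
    using kernel[OF that]
    by (simp add: scaleR_sum_left[symmetric] flip: scaleR_diff_left)
  then have "closed_loop_solution n a x"
    unfolding x_def by (rule translation_equilibrium)
  moreover have "dq_log (x b t) - dq_log (x d t) = (0, axis 1 1)" for t
    using bd by (simp add: x_def dq_log_translation_pose)
  then have "\<not> ((\<lambda>t. dq_log (x b t) - dq_log (x d t)) \<longlongrightarrow> 0) at_top"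
    by (simp add: tendsto_const_iff zero_prod_def)
  ultimately show "\<not> achieves_output_consensus n a"
    using bd unfolding achieves_output_consensus_def by blast
qed

theorem theorem8:
  fixes n :: nat and a :: "nat \<Rightarrow> nat \<Rightarrow> real"
  assumes "n \<ge> 1"
    and "\<And>i j. i < n \<Longrightarrow> j < n \<Longrightarrow> a i j \<ge> 0"
    and "\<And>i. i < n \<Longrightarrow> a i i = 0"
  shows "achieves_output_consensus n a \<longleftrightarrow> has_directed_spanning_tree n a"
proof
  show "has_directed_spanning_tree n a" if "achieves_output_consensus n a"
    using no_output_consensus_of_no_spanning_tree[where a = a, OF assms(1,2)] that by blast
  show "achieves_output_consensus n a" if "has_directed_spanning_tree n a"
    using output_consensus_of_spanning_tree[where a = a, OF assms(2) that] .
qed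

end
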